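(* Let $I$ be a monomial ideal of $R=K[x_1,\ldots,x_d]$ ($K$ a field). The function $\exp:\mathbb{R}_+\to\mathcal{T}$, $\exp(r)=\overline{I^r}$, where $\mathbb{R}_+$ carries the Euclidean topology and $\mathcal{T}=\{\overline{I^r}\mid r\in\mathbb{R}_+\}$ carries the discrete topology, is left continuous. Equivalently, for every $r>0$ there exists $\varepsilon_0>0$ such that $\overline{I^{r-\varepsilon}}=\overline{I^r}$ for all $0<\varepsilon<\varepsilon_0$.
   Context: $\mathbb{R}_+$ denotes the non-negative reals, $\mathbb{N}$ the non-negative integers, and $\mathbf{x}^{\mathbf{a}}=x_1^{a_1}\cdots x_d^{a_d}$. $NP(I)$ is the convex hull in $\mathbb{R}^d$ of $\{\mathbf{a}\in\mathbb{N}^d\mid \mathbf{x}^{\mathbf{a}}\in I\}$. For real $t\ge0$, the $t$-th real power of $I$ is $\overline{I^t}=(\{\mathbf{x}^{\mathbf{a}}\mid \mathbf{a}\in t\cdot NP(I)\cap\mathbb{N}^d\})$, where $t\cdot NP(I)=\{t\mathbf{v}\mid \mathbf{v}\in NP(I)\}$. *)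

theory Defs
  imports "HOL-Analysis.Analysis" "HOL-Library.Poly_Mapping"
begin

text \<open>Polynomial ring K[x_i | i in 'n] over a field 'k, with finitely many variables
  indexed by the finite type 'n (so d = CARD('n)).\<close>

type_synonym ('n, 'k) mpoly = "('n \<Rightarrow>\<^sub>0 nat) \<Rightarrow>\<^sub>0 'k"

definition monom :: "('n \<Rightarrow>\<^sub>0 nat) \<Rightarrow> ('n, 'k::field) mpoly" where
  "monom a = Poly_Mapping.single a 1"

definition is_ideal :: "('n, 'k::field) mpoly set \<Rightarrow> bool" where
  "is_ideal I \<longleftrightarrow> 0 \<in> I \<and> (\<forall>p\<in>I. \<forall>q\<in>I. p + q \<in> I) \<and> (\<forall>r. \<forall>p\<in>I. r * p \<in> I)"

definition ideal_gen :: "('n, 'k::field) mpoly set \<Rightarrow> ('n, 'k) mpoly set" where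
  "ideal_gen S = {p. \<exists>F c. finite F \<and> F \<subseteq> S \<and> p = (\<Sum>s\<in>F. c s * s)}"

definition monomial_ideal :: "('n, 'k::field) mpoly set \<Rightarrow> bool" where
  "monomial_ideal I \<longleftrightarrow> is_ideal I \<and> I = ideal_gen {monom a | a. monom a \<in> I}"

definition expvec :: "('n::finite \<Rightarrow>\<^sub>0 nat) \<Rightarrow> real ^ 'n" where
  "expvec a = (\<chi> i. real (Poly_Mapping.lookup a i))"

definition NP :: "('n::finite, 'k::field) mpoly set \<Rightarrow> (real ^ 'n) set" where
  "NP I = convex hull {expvec a | a. monom a \<in> I}"

definition real_power :: "('n::finite, 'k::field) mpoly set \<Rightarrow> real \<Rightarrow> ('n, 'k) mpoly set" where
  "real_power I t = ideal_gen {monom a | a. expvec a \<in> (\<lambda>v. t *\<^sub>R v) ` NP I}"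

end

theory Submission
  imports Defs
begin

text \<open>The exponents of the monomials of a monomial ideal form an upward closed set of
  lattice points. By Dickson's lemma it has a finite set G of minimal elements, so
  NP(I) = conv(G) + R^d_+; in particular NP(I) is closed. A lattice point a lies in t NP(I)
  iff t p \<le> a for some p in conv(G), which only gets easier as t decreases. Truncating a
  at a level c \<ge> r max(conv G) does not affect this for t \<le> r, so only the finitely many
  lattice points of [0, c]^d matter, and by closedness each of them outside r NP(I) stays
  outside t NP(I) for t close to r.\<close>

lemma incseq_subseq_wellorder:
  fixes u :: "nat \<Rightarrow> 'a::wellorder"
  shows "\<exists>h. strict_mono h \<and> incseq (u \<circ> h)"
proof -
  obtain f where f: "strict_mono f" "monoseq (u \<circ> f)"
    using seq_monosub[of u] by (auto simp: o_def)
  show ?thesis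
  proof (cases "incseq (u \<circ> f)")
    case True
    with f(1) show ?thesis by blast
  next
    case False
    then have dec: "decseq (u \<circ> f)"
      using f(2) monoseq_iff by blast
    obtain N where N_least: "u (f N) = (LEAST x. x \<in> range (u \<circ> f))"
      using LeastI[of "\<lambda>x. x \<in> range (u \<circ> f)" "u (f 0)"] by auto
    have N: "u (f N) \<le> u (f k)" for k
      unfolding N_least by (rule Least_le) simp
    have const: "u (f (k + N)) = u (f N)" for k
      using dec N by (simp add: decseq_def antisym)
    have "strict_mono (f \<circ> (\<lambda>k. k + N))"
      using f(1) by (simp add: strict_mono_def)
    moreover have "incseq (u \<circ> (f \<circ> (\<lambda>k. k + N)))"
      using const by (simp add: incseq_def)
    ultimately show ?thesis by blast
  qed
qed

lemma good_pair_pointwise: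
  fixes f :: "nat \<Rightarrow> 'n::finite \<Rightarrow> 'a::wellorder"
  shows "\<exists>i j. i < j \<and> f i \<le> f j"
proof -
  have "\<exists>h. strict_mono h \<and> (\<forall>x\<in>S. incseq (\<lambda>k. f (h k) x))" if "finite S" for S
    using that
  proof (induction S rule: finite_induct)
    case empty
    have "strict_mono (id :: nat \<Rightarrow> nat)" by (simp add: strict_mono_def)
    then show ?case by blast
  next
    case (insert x S)
    then obtain h where h: "strict_mono h" "\<forall>y\<in>S. incseq (\<lambda>k. f (h k) y)"
      by blast
    obtain h' where h': "strict_mono h'" "incseq (\<lambda>k. f (h (h' k)) x)"
      using incseq_subseq_wellorder[of "\<lambda>k. f (h k) x"] by (auto simp: o_def)
    have "incseq (\<lambda>k. f (h (h' k)) y)" if "y \<in> S" for y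
      using h(2) that strict_mono_mono[OF h'(1)] by (simp add: incseq_def monoD)
    then have "strict_mono (h \<circ> h') \<and> (\<forall>y\<in>insert x S. incseq (\<lambda>k. f ((h \<circ> h') k) y))"
      using h(1) h' by (auto simp: strict_mono_def)
    then show ?case by blast
  qed
  from this[of UNIV] obtain h where h: "strict_mono h" "\<And>x. incseq (\<lambda>k. f (h k) x)"
    by auto
  have "h 0 < h 1" "f (h 0) \<le> f (h 1)"
    using h by (auto simp: strict_mono_def incseq_def le_fun_def)
  then show ?thesis by blast
qed

lemma finite_atMost_fun_nat: "finite {..g :: 'n::finite \<Rightarrow> nat}"
proof -
  have "{..g} = Pi\<^sub>E UNIV (\<lambda>i. {..g i})"
    by (auto simp: PiE_UNIV_domain Pi_def le_fun_def)
  then show ?thesis by (simp add: finite_PiE)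
qed

lemma dickson_finite_basis:
  fixes E :: "('n::finite \<Rightarrow> nat) set"
  obtains G where "finite G" "G \<subseteq> E" "\<And>e. e \<in> E \<Longrightarrow> \<exists>g\<in>G. g \<le> e"
proof
  define G where "G = {g\<in>E. \<forall>e\<in>E. e \<le> g \<longrightarrow> e = g}"
  show "finite G"
  proof (rule ccontr)
    assume "infinite G"
    then obtain f :: "nat \<Rightarrow> _" where f: "inj f" "range f \<subseteq> G"
      using infinite_countable_subset by blast
    obtain i j where "i < j" "f i \<le> f j"
      using good_pair_pointwise[of f] by blast
    moreover have "f i \<in> E" "f j \<in> G"
      using f(2) by (auto simp: G_def)
    ultimately show False
      using f(1) by (auto simp: G_def inj_eq)
  qed
  show "G \<subseteq> E" by (auto simp: G_def)
  fix e assume "e \<in> E"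
  then obtain g where g: "g \<in> E \<inter> {..e}" "\<And>x. x \<in> E \<inter> {..e} \<Longrightarrow> x \<le> g \<Longrightarrow> g = x"
    using finite_has_minimal2[of "E \<inter> {..e}" e] finite_atMost_fun_nat by blast
  then have "g \<in> G"
    by (auto simp: G_def intro: order_trans)
  with g(1) show "\<exists>g\<in>G. g \<le> e" by blast
qed

definition up_closure :: "'a::ord set \<Rightarrow> 'a set" where
  "up_closure P = {y. \<exists>p\<in>P. p \<le> y}"

lemma convex_up_closure:
  fixes P :: "(real^'n) set"
  assumes "convex P"
  shows "convex (up_closure P)"
proof (rule convexI)
  fix x y and u v :: real
  assume "x \<in> up_closure P" "y \<in> up_closure P" "0 \<le> u" "0 \<le> v" "u + v = 1"
  moreover from this obtain px py where "px \<in> P" "px \<le> x" "py \<in> P" "py \<le> y"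
    by (auto simp: up_closure_def)
  ultimately have "u *\<^sub>R px + v *\<^sub>R py \<in> P" "u *\<^sub>R px + v *\<^sub>R py \<le> u *\<^sub>R x + v *\<^sub>R y"
    using assms by (auto simp: less_eq_vec_def convexD intro!: add_mono mult_left_mono)
  then show "u *\<^sub>R x + v *\<^sub>R y \<in> up_closure P"
    by (auto simp: up_closure_def)
qed

lemma closed_up_closure:
  fixes P :: "(real^'n) set"
  assumes "compact P"
  shows "closed (up_closure P)"
proof -
  have "up_closure P = (\<Union>x\<in>{x. \<forall>i. 0 \<le> x$i}. \<Union>p\<in>P. {x + p})"
  proof (intro set_eqI iffI)
    fix y assume "y \<in> up_closure P"
    then obtain p where "p \<in> P" "p \<le> y"
      by (auto simp: up_closure_def)
    then show "y \<in> (\<Union>x\<in>{x. \<forall>i. 0 \<le> x$i}. \<Union>p\<in>P. {x + p})"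
      by (auto simp: less_eq_vec_def intro!: exI[of _ "y - p"])
  next
    fix y assume "y \<in> (\<Union>x\<in>{x. \<forall>i. 0 \<le> x$i}. \<Union>p\<in>P. {x + p})"
    then obtain x p where "\<forall>i. 0 \<le> x$i" "p \<in> P" "y = x + p"
      by blast
    then show "y \<in> up_closure P"
      by (auto simp: up_closure_def less_eq_vec_def intro!: bexI[of _ p])
  qed
  then show ?thesis
    using closed_compact_sums[OF closed_positive_orthant assms] by simp
qed

lemma scaleR_image_up_closure_iff:
  fixes P :: "(real^'n) set"
  assumes "t > 0"
  shows "v \<in> (\<lambda>y. t *\<^sub>R y) ` up_closure P \<longleftrightarrow> (\<exists>p\<in>P. t *\<^sub>R p \<le> v)"
proof
  assume "v \<in> (\<lambda>y. t *\<^sub>R y) ` up_closure P"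
  then show "\<exists>p\<in>P. t *\<^sub>R p \<le> v"
    using assms by (fastforce simp: up_closure_def less_eq_vec_def)
next
  assume "\<exists>p\<in>P. t *\<^sub>R p \<le> v"
  then have "v /\<^sub>R t \<in> up_closure P"
    using assms by (auto simp: up_closure_def less_eq_vec_def field_simps)
  moreover have "v = t *\<^sub>R (v /\<^sub>R t)"
    using assms by simp
  ultimately show "v \<in> (\<lambda>y. t *\<^sub>R y) ` up_closure P" by blast
qed

lemma convex_hull_add_axis:
  fixes S :: "(real^'n) set"
  assumes S: "\<And>x j n. x \<in> S \<Longrightarrow> x + real n *\<^sub>R axis j 1 \<in> S"
    and x: "x \<in> convex hull S" and s: "0 \<le> s"
  shows "x + s *\<^sub>R axis j 1 \<in> convex hull S"
proof -
  define n where "n = Suc (nat \<lceil>s\<rceil>)"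
  have n: "s \<le> real n" "0 < real n"
    unfolding n_def by linarith+
  define v where "v = real n *\<^sub>R axis j (1::real)"
  have "(\<lambda>y. v + y) ` S \<subseteq> S"
    using S by (auto simp: v_def add.commute)
  then have "(\<lambda>y. v + y) ` (convex hull S) \<subseteq> convex hull S"
    by (metis convex_hull_translation hull_mono)
  with x have "x + v \<in> convex hull S"
    by (auto simp: add.commute)
  moreover have "x + s *\<^sub>R axis j 1 = (1 - s / real n) *\<^sub>R x + (s / real n) *\<^sub>R (x + v)"
    using n by (simp add: v_def algebra_simps)
  ultimately show ?thesis
    using x n s by (simp add: convexD)
qed

lemma convex_hull_upward_closed:
  fixes S :: "(real^'n) set"
  assumes S: "\<And>x j n. x \<in> S \<Longrightarrow> x + real n *\<^sub>R axis j 1 \<in> S"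
    and x: "x \<in> convex hull S" and "x \<le> y"
  shows "y \<in> convex hull S"
proof -
  have partial_sums: "x + (\<Sum>j\<in>F. (y - x)$j *\<^sub>R axis j 1) \<in> convex hull S"
    if "finite F" for F
    using that
  proof (induction F rule: finite_induct)
    case empty
    with x show ?case by simp
  next
    case (insert j F)
    have "0 \<le> (y - x)$j"
      using \<open>x \<le> y\<close> by (simp add: less_eq_vec_def)
    from convex_hull_add_axis[OF S insert.IH this] show ?case
      using insert.hyps by (simp add: add_ac)
  qed
  have "x + (\<Sum>j\<in>UNIV. (y - x)$j *\<^sub>R axis j 1) = y"
    by (simp add: vec_eq_iff axis_def if_distrib[of "(*) _"] cong: if_cong)
  with partial_sums[of UNIV] show ?thesis
    by simp
qed

lemma eventually_not_dominated:
  fixes P :: "(real^'n) set"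
  assumes "compact P" "r > 0" "\<not> (\<exists>p\<in>P. r *\<^sub>R p \<le> v)"
  shows "\<forall>\<^sub>F t in at r. \<not> (\<exists>p\<in>P. t *\<^sub>R p \<le> v)"
proof -
  have "v /\<^sub>R r \<notin> up_closure P"
    using assms(2,3) scaleR_image_up_closure_iff[OF assms(2), of v P] by force
  moreover have "((\<lambda>t. v /\<^sub>R t) \<longlongrightarrow> v /\<^sub>R r) (at r)"
    using assms(2) by (auto intro!: tendsto_intros)
  ultimately have "\<forall>\<^sub>F t in at r. v /\<^sub>R t \<in> - up_closure P"
    using closed_up_closure[OF assms(1)] by (intro topological_tendstoD) (auto simp: open_Compl)
  moreover have "\<forall>\<^sub>F t in at r. 0 < t"
    using order_tendstoD(1)[OF tendsto_ident_at assms(2)] .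
  ultimately show ?thesis
  proof eventually_elim
    case (elim t)
    then have "v \<notin> (\<lambda>y. t *\<^sub>R y) ` up_closure P"
      by auto
    with elim show ?case
      by (simp add: scaleR_image_up_closure_iff)
  qed
qed

lemma lattice_dominance_left_stable:
  fixes P :: "(real^'n) set"
  assumes P: "compact P" "\<forall>p\<in>P. 0 \<le> p" and "r > 0"
  obtains \<delta> where "\<delta> > 0"
    "\<And>t m. r - \<delta> < t \<Longrightarrow> t \<le> r \<Longrightarrow>
       (\<exists>p\<in>P. t *\<^sub>R p \<le> (\<chi> i. real (m i))) \<longleftrightarrow> (\<exists>p\<in>P. r *\<^sub>R p \<le> (\<chi> i. real (m i)))"
proof -
  obtain K where K: "\<And>p i. p \<in> P \<Longrightarrow> p$i \<le> K"
    using compact_imp_bounded[OF P(1)] unfolding bounded_iff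
    by (meson abs_le_D1 component_le_norm_cart order_trans)
  define c where "c = nat \<lceil>r * K\<rceil>"
  define F where "F = (\<lambda>m. \<chi> i. real (m i)) ` {..(\<lambda>_::'n. c)}"
  have "finite F"
    by (simp add: F_def finite_atMost_fun_nat)
  then have "\<forall>\<^sub>F t in at r. \<forall>v\<in>F. \<not> (\<exists>p\<in>P. r *\<^sub>R p \<le> v) \<longrightarrow> \<not> (\<exists>p\<in>P. t *\<^sub>R p \<le> v)"
    using eventually_not_dominated[OF P(1) \<open>r > 0\<close>]
    by (intro eventually_ball_finite) (auto intro: eventually_mono)
  then obtain \<delta> where "\<delta> > 0" and \<delta>: "\<And>t v. t \<noteq> r \<Longrightarrow> dist t r < \<delta> \<Longrightarrow> v \<in> F \<Longrightarrow>
      \<not> (\<exists>p\<in>P. r *\<^sub>R p \<le> v) \<Longrightarrow> \<not> (\<exists>p\<in>P. t *\<^sub>R p \<le> v)"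
    unfolding eventually_at by blast
  have "(\<exists>p\<in>P. t *\<^sub>R p \<le> v) \<longleftrightarrow> (\<exists>p\<in>P. r *\<^sub>R p \<le> v)"
    if t: "r - \<delta> < t" "t \<le> r" and v: "v = (\<chi> i. real (m i))" for t m v
  proof
    assume "\<exists>p\<in>P. r *\<^sub>R p \<le> v"
    moreover have "t *\<^sub>R p \<le> r *\<^sub>R p" if "p \<in> P" for p
      using P(2) that t(2) by (auto simp: less_eq_vec_def intro: mult_right_mono)
    ultimately show "\<exists>p\<in>P. t *\<^sub>R p \<le> v"
      by (meson order_trans)
  next
    assume "\<exists>p\<in>P. t *\<^sub>R p \<le> v"
    then obtain p where p: "p \<in> P" "t *\<^sub>R p \<le> v"
      by blast
    define w where "w = (\<chi> i. real (min (m i) c))"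
    have "w \<in> F"
      unfolding F_def w_def by (rule image_eqI[of _ _ "\<lambda>i. min (m i) c"]) (auto simp: le_fun_def)
    have "t * p$i \<le> real c" for i
    proof -
      have "t * p$i \<le> r * p$i"
        using P(2) p(1) t(2) by (auto simp: less_eq_vec_def intro: mult_right_mono)
      also have "\<dots> \<le> r * K"
        using K p(1) \<open>r > 0\<close> by simp
      also have "\<dots> \<le> real c"
        unfolding c_def by linarith
      finally show ?thesis .
    qed
    with p(2) have "t *\<^sub>R p \<le> w"
      by (auto simp: w_def v less_eq_vec_def of_nat_min)
    then have "\<exists>p\<in>P. r *\<^sub>R p \<le> w"
      using \<delta>[of t w] \<open>w \<in> F\<close> p(1) t by (cases "t = r") (auto simp: dist_real_def)
    moreover have "w \<le> v"
      by (simp add: w_def v less_eq_vec_def)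
    ultimately show "\<exists>p\<in>P. r *\<^sub>R p \<le> v"
      by (meson order_trans)
  qed
  with \<open>\<delta> > 0\<close> that show thesis
    by blast
qed

lemma monom_mult: "monom a * monom b = (monom (a + b) :: ('n, 'k::field) mpoly)"
  by (simp add: monom_def mult_single)

lemma is_ideal_monom_add:
  assumes "is_ideal I" "monom a \<in> I"
  shows "monom (a + b) \<in> I"
proof -
  have "monom b * monom a \<in> I"
    using assms unfolding is_ideal_def by blast
  then show ?thesis
    by (simp add: monom_mult add.commute)
qed

lemma expvec_add_single:
  "expvec (a + Poly_Mapping.single j n) = expvec a + real n *\<^sub>R axis j 1"
  by (simp add: expvec_def axis_def vec_eq_iff lookup_add lookup_single when_def)

lemma NP_eq_up_closure:
  fixes I :: "('n::finite, 'k::field) mpoly set"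
  assumes "is_ideal I"
  obtains P where "compact P" "\<forall>p\<in>P. 0 \<le> p" "NP I = up_closure P"
proof -
  define E where "E = {a. monom a \<in> I}"
  have NP_E: "NP I = convex hull (expvec ` E)"
    unfolding NP_def E_def by (simp add: setcompr_eq_image)
  have E_up: "x + real n *\<^sub>R axis j 1 \<in> expvec ` E" if x: "x \<in> expvec ` E" for x j n
  proof -
    obtain a where "monom a \<in> I" "x = expvec a"
      using x unfolding E_def by blast
    then show ?thesis
      using is_ideal_monom_add[OF assms] by (auto simp: E_def simp flip: expvec_add_single)
  qed
  obtain G where G: "finite G" "G \<subseteq> Poly_Mapping.lookup ` E"
    "\<And>e. e \<in> Poly_Mapping.lookup ` E \<Longrightarrow> \<exists>g\<in>G. g \<le> e"
    using dickson_finite_basis[of "Poly_Mapping.lookup ` E"] by blast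
  define P where "P = convex hull ((\<lambda>g. \<chi> i. real (g i)) ` G)"
  show thesis
  proof
    show "compact P"
      unfolding P_def using G(1) by (simp add: finite_imp_compact_convex_hull)
    have "P \<subseteq> {x. \<forall>i. 0 \<le> x$i}"
      unfolding P_def by (rule hull_minimal) (auto intro!: convex_box_cart simp flip: atLeast_def)
    then show "\<forall>p\<in>P. 0 \<le> p"
      by (auto simp: less_eq_vec_def)
    show "NP I = up_closure P"
    proof
      have "expvec ` E \<subseteq> up_closure P"
      proof
        fix x assume "x \<in> expvec ` E"
        then obtain e where "e \<in> E" "x = expvec e"
          by blast
        moreover from this obtain g where "g \<in> G" "g \<le> Poly_Mapping.lookup e"
          using G(3) by blast
        moreover have "(\<chi> i. real (g i)) \<in> P"
          unfolding P_def using \<open>g \<in> G\<close> by (simp add: hull_inc)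
        ultimately show "x \<in> up_closure P"
          unfolding up_closure_def
          by (auto simp: expvec_def less_eq_vec_def le_fun_def intro!: bexI[of _ "\<chi> i. real (g i)"])
      qed
      then show "NP I \<subseteq> up_closure P"
        unfolding NP_E by (intro hull_minimal convex_up_closure) (auto simp: P_def)
      have "(\<lambda>g. \<chi> i. real (g i)) ` G \<subseteq> expvec ` E"
        using G(2) by (auto simp: expvec_def)
      then have "P \<subseteq> NP I"
        unfolding NP_E P_def by (rule hull_mono)
      then show "up_closure P \<subseteq> NP I"
        unfolding up_closure_def NP_E using convex_hull_upward_closed[OF E_up] by blast
    qed
  qed
qed

theorem proposition5p6:
  fixes I :: "('n::finite, 'k::field) mpoly set" and r :: real
  assumes "monomial_ideal I" and "r > 0"
  shows "\<exists>\<epsilon>0>0. \<epsilon>0 \<le> r \<and>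
           (\<forall>\<epsilon>. 0 < \<epsilon> \<and> \<epsilon> < \<epsilon>0 \<longrightarrow> real_power I (r - \<epsilon>) = real_power I r)"
proof -
  obtain P where P: "compact P" "\<forall>p\<in>P. 0 \<le> p" "NP I = up_closure P"
    using NP_eq_up_closure assms(1) unfolding monomial_ideal_def by blast
  obtain \<delta> where "\<delta> > 0" and \<delta>: "\<And>t m. r - \<delta> < t \<Longrightarrow> t \<le> r \<Longrightarrow>
      (\<exists>p\<in>P. t *\<^sub>R p \<le> (\<chi> i. real (m i))) \<longleftrightarrow> (\<exists>p\<in>P. r *\<^sub>R p \<le> (\<chi> i. real (m i)))"
    using lattice_dominance_left_stable[OF P(1,2) assms(2)] by blast
  show ?thesis
  proof (intro exI[of _ "min \<delta> r"] conjI allI impI)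
    show "min \<delta> r > 0" "min \<delta> r \<le> r"
      using \<open>\<delta> > 0\<close> assms(2) by auto
    fix \<epsilon> assume \<epsilon>: "0 < \<epsilon> \<and> \<epsilon> < min \<delta> r"
    have "expvec a \<in> (\<lambda>v. (r - \<epsilon>) *\<^sub>R v) ` NP I \<longleftrightarrow> expvec a \<in> (\<lambda>v. r *\<^sub>R v) ` NP I" for a
      using \<delta>[of "r - \<epsilon>" "Poly_Mapping.lookup a"] \<epsilon> assms(2)
      by (simp add: P(3) scaleR_image_up_closure_iff expvec_def)
    then show "real_power I (r - \<epsilon>) = real_power I r"
      unfolding real_power_def by simp
  qed
qed

end
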